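(* Let $A \in \mathbb{R}^{m \times r}$ and $C = \{ x \in \mathbb{R}^r \mid Ax \ge 0\}$. Then $C$ has only finitely many conformally non-decomposable vectors up to positive scalar multiples.
   Context: For $x \in \mathbb{R}^n$, $\operatorname{sign}(x) \in \{-,0,+\}^n$ is obtained by applying the sign function componentwise; the relations $0<-$, $0<+$ induce a componentwise partial order on $\{-,0,+\}^n$. A nonzero $x \in C$ is conformally non-decomposable if for all nonzero $x^1,x^2 \in C$ with $\operatorname{sign}(x^1),\operatorname{sign}(x^2) \le \operatorname{sign}(x)$, $x = x^1 + x^2$ implies $x^1 = \lambda x^2$ for some $\lambda > 0$. *)

theory Defs
  imports "HOL-Analysis.Analysis"
begin

text \<open>The partial order on sign values has 0 below - and +, and - and + incomparable;
  componentwise: sign(x) \<le> sign(y) iff each component of sign(x) is 0 or equals that of sign(y).\<close>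
definition sign_le :: "real ^ 'n \<Rightarrow> real ^ 'n \<Rightarrow> bool" where
  "sign_le x y \<longleftrightarrow> (\<forall>i. sgn (x $ i) = 0 \<or> sgn (x $ i) = sgn (y $ i))"

definition conf_nondecomp :: "(real ^ 'n) set \<Rightarrow> real ^ 'n \<Rightarrow> bool" where
  "conf_nondecomp C x \<longleftrightarrow> x \<in> C \<and> x \<noteq> 0 \<and>
     (\<forall>x1 x2. x1 \<in> C \<and> x2 \<in> C \<and> x1 \<noteq> 0 \<and> x2 \<noteq> 0 \<and>
        sign_le x1 x \<and> sign_le x2 x \<and> x = x1 + x2 \<longrightarrow> (\<exists>l>0. x1 = l *\<^sub>R x2))"

end

theory Submission
  imports Defs
begin

text \<open>
  Let x be conformally non-decomposable and let x' be a nonzero vector of C with the same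
  sign vector as x such that A x' vanishes wherever A x does. For small t > 0 the vectors
  x - t x' and A (x - t x') have the same sign vectors as x and A x, so
  x = (x - t x') + t x' is a conformal decomposition inside C; non-decomposability forces x
  to be a positive multiple of x'. Hence x is determined up to positive scaling by its sign
  vector and the zero set of A x, of which there are only finitely many.
\<close>

lemma eventually_sgn_diff_scaled:
  fixes a b :: real
  assumes "a = 0 \<Longrightarrow> b = 0"
  shows "\<forall>\<^sub>F t in at_right 0. sgn (a - t * b) = sgn a"
proof (cases "a = 0")
  case True
  then show ?thesis using assms by simp
next
  case False
  have "((\<lambda>t. a - t * b) \<longlongrightarrow> a - 0 * b) (at_right (0::real))"
    by (intro tendsto_intros)
  then have lim: "((\<lambda>t. a - t * b) \<longlongrightarrow> a) (at_right (0::real))"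
    by simp
  consider "a > 0" | "a < 0" using False by linarith
  then show ?thesis
  proof cases
    case 1
    with order_tendstoD(1)[OF lim 1] show ?thesis
      by (elim eventually_mono) simp
  next
    case 2
    with order_tendstoD(2)[OF lim 2] show ?thesis
      by (elim eventually_mono) simp
  qed
qed

lemma eventually_sgn_vec_diff_scaled:
  fixes v w :: "real ^ 'n"
  assumes "\<And>j. v $ j = 0 \<Longrightarrow> w $ j = 0"
  shows "\<forall>\<^sub>F t in at_right 0. \<forall>j. sgn ((v - t *\<^sub>R w) $ j) = sgn (v $ j)"
  by (rule eventually_all_finite) (use assms in \<open>auto intro: eventually_sgn_diff_scaled\<close>)

lemma exists_conformal_difference_in_cone:
  fixes A :: "real ^ 'r ^ 'm"
  assumes Ax: "\<And>i. (A *v x) $ i \<ge> 0"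
    and same_sgn: "\<And>j. sgn (x' $ j) = sgn (x $ j)"
    and active: "\<And>i. (A *v x) $ i = 0 \<Longrightarrow> (A *v x') $ i = 0"
  obtains t where "t > 0" "\<And>i. (A *v (x - t *\<^sub>R x')) $ i \<ge> 0"
    "sign_le (x - t *\<^sub>R x') x"
proof -
  have "x $ j = 0 \<Longrightarrow> x' $ j = 0" for j
    using same_sgn[of j] by (simp add: sgn_eq_0_iff)
  then have "\<forall>\<^sub>F t in at_right 0. \<forall>j. sgn ((x - t *\<^sub>R x') $ j) = sgn (x $ j)"
    by (rule eventually_sgn_vec_diff_scaled)
  moreover have "\<forall>\<^sub>F t in at_right 0.
      \<forall>i. sgn ((A *v x - t *\<^sub>R (A *v x')) $ i) = sgn ((A *v x) $ i)"
    using active by (rule eventually_sgn_vec_diff_scaled)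
  ultimately have "\<forall>\<^sub>F t in at_right 0. t > 0 \<and> (\<forall>j. sgn ((x - t *\<^sub>R x') $ j) = sgn (x $ j)) \<and>
      (\<forall>i. sgn ((A *v x - t *\<^sub>R (A *v x')) $ i) = sgn ((A *v x) $ i))"
    using eventually_at_right_less[of 0] by eventually_elim blast
  then obtain t where t: "t > 0" and sgn_y: "\<And>j. sgn ((x - t *\<^sub>R x') $ j) = sgn (x $ j)"
    and sgn_Ay: "\<And>i. sgn ((A *v x - t *\<^sub>R (A *v x')) $ i) = sgn ((A *v x) $ i)"
    using eventually_happens' trivial_limit_at_right_real by blast
  have "(A *v (x - t *\<^sub>R x')) $ i \<ge> 0" for i
    using sgn_Ay[of i] Ax[of i]
    by (auto simp: matrix_vector_mult_diff_distrib matrix_vector_mult_scaleR sgn_real_def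
        split: if_splits)
  moreover have "sign_le (x - t *\<^sub>R x') x"
    using sgn_y by (simp add: sign_le_def)
  ultimately show ?thesis using t that by blast
qed

lemma conf_nondecomp_positive_multiple:
  fixes A :: "real ^ 'r ^ 'm"
  assumes C_def: "C = {x. \<forall>i. (A *v x) $ i \<ge> 0}"
    and nd: "conf_nondecomp C x" and x'C: "x' \<in> C" and x'0: "x' \<noteq> 0"
    and same_sgn: "\<And>j. sgn (x' $ j) = sgn (x $ j)"
    and active: "\<And>i. (A *v x) $ i = 0 \<Longrightarrow> (A *v x') $ i = 0"
  shows "\<exists>l>0. x = l *\<^sub>R x'"
proof -
  have "x \<in> C" using nd unfolding conf_nondecomp_def by blast
  then obtain t where t: "t > 0" and yC: "x - t *\<^sub>R x' \<in> C"
    and sign_y: "sign_le (x - t *\<^sub>R x') x"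
    using exists_conformal_difference_in_cone[OF _ same_sgn active] C_def by auto
  have tx'C: "t *\<^sub>R x' \<in> C" using x'C t unfolding C_def
    by (simp add: matrix_vector_mult_scaleR)
  have sign_tx': "sign_le (t *\<^sub>R x') x"
    using same_sgn t by (simp add: sign_le_def sgn_mult)
  have tx'0: "t *\<^sub>R x' \<noteq> 0" using t x'0 by simp
  show ?thesis
  proof (cases "x - t *\<^sub>R x' = 0")
    case True
    then show ?thesis using t by auto
  next
    case False
    then obtain l where "l > 0" "x - t *\<^sub>R x' = l *\<^sub>R (t *\<^sub>R x')"
      using nd yC tx'C tx'0 sign_y sign_tx' unfolding conf_nondecomp_def
      by (metis diff_add_cancel)
    then have "x = (l * t + t) *\<^sub>R x'" "l * t + t > 0"
      using t by (simp_all add: algebra_simps add_pos_pos)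
    then show ?thesis by blast
  qed
qed

lemma finite_representatives:
  assumes "finite (key ` S)"
    and "\<And>x y. x \<in> S \<Longrightarrow> y \<in> S \<Longrightarrow> key x = key y \<Longrightarrow> R x y"
  shows "\<exists>F. finite F \<and> (\<forall>x\<in>S. \<exists>f\<in>F. R x f)"
proof (intro exI conjI ballI)
  define rep where "rep k = (SOME y. y \<in> S \<and> key y = k)" for k
  show "finite (rep ` key ` S)" using assms(1) by simp
  fix x assume "x \<in> S"
  then have "rep (key x) \<in> S \<and> key (rep (key x)) = key x"
    unfolding rep_def using someI[of "\<lambda>y. y \<in> S \<and> key y = key x" x] by blast
  then have "R x (rep (key x))" using assms(2) \<open>x \<in> S\<close> by simp
  then show "\<exists>f\<in>rep ` key ` S. R x f" using \<open>x \<in> S\<close> by blast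
qed

theorem proposition3:
  fixes A :: "real ^ 'r ^ 'm"
  defines "C \<equiv> {x :: real ^ 'r. \<forall>i. (A *v x) $ i \<ge> 0}"
  shows "\<exists>F. finite F \<and> (\<forall>x. conf_nondecomp C x \<longrightarrow> (\<exists>f\<in>F. \<exists>l>0. x = l *\<^sub>R f))"
proof -
  define key where
    "key x = ({j. x $ j > 0}, {j. x $ j < 0}, {i. (A *v x) $ i = 0})" for x :: "real ^ 'r"
  have "\<exists>l>0. x = l *\<^sub>R f"
    if "conf_nondecomp C x" "conf_nondecomp C f" "key x = key f" for x f
  proof (rule conf_nondecomp_positive_multiple[OF _ that(1)])
    show "sgn (f $ j) = sgn (x $ j)" for j
    proof -
      have "x $ j > 0 \<longleftrightarrow> f $ j > 0" "x $ j < 0 \<longleftrightarrow> f $ j < 0"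
        using \<open>key x = key f\<close> by (auto simp: key_def set_eq_iff)
      then show ?thesis unfolding sgn_real_def by (smt (verit))
    qed
    show "(A *v f) $ i = 0" if "(A *v x) $ i = 0" for i
      using \<open>key x = key f\<close> that by (auto simp: key_def set_eq_iff)
  qed (use that(2) C_def in \<open>auto simp: conf_nondecomp_def\<close>)
  then have "\<exists>F. finite F \<and> (\<forall>x\<in>{x. conf_nondecomp C x}. \<exists>f\<in>F. \<exists>l>0. x = l *\<^sub>R f)"
    by (intro finite_representatives[where key = key]) auto
  then show ?thesis by blast
qed

end
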